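(* Let $X$ be a compactum, let $n\geq2$, let $A\in F_n(X)$, and let $f:X\to X$ be a function. Consider the statements: (1) each $x\in A$ is a quasi-periodic point of $f$; (2) $A$ is a quasi-periodic point of $F_n(f)$; (3) $q(A)$ is a quasi-periodic point of $SF_n(f)$. Then (1) implies (2), and (2) implies (3).
   Context: A compactum is a nondegenerate compact, perfect, Hausdorff topological space. $F_n(X)$ is the set of nonempty subsets of $X$ with at most $n$ points, with the Vietoris topology; $F_1(X)=\{\{x\}:x\in X\}$; $F_n(f)(A)=f(A)$. For $n\geq2$, $SF_n(X)=F_n(X)/F_1(X)$ is the quotient collapsing $F_1(X)$ to a point, $q:F_n(X)\to SF_n(X)$ the quotient map, $F_X=q(F_1(X))$, and $SF_n(f)(\chi)=q(F_n(f)(q^{-1}(\chi)))$ for $\chi\neq F_X$, $SF_n(f)(F_X)=F_X$. A point $x$ is a quasi-periodic point of $g:Z\to Z$ if for every open $U\ni x$ there is $m\in\mathbb{N}$ with $g^{km}(x)\in U$ for all integers $k\geq0$. *)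

theory Defs
  imports "HOL-Analysis.Analysis"
begin

definition compactum :: "'a topology \<Rightarrow> bool" where
  "compactum X \<longleftrightarrow> compact_space X \<and> Hausdorff_space X
     \<and> X derived_set_of (topspace X) = topspace X
     \<and> (\<exists>x\<in>topspace X. \<exists>y\<in>topspace X. x \<noteq> y)"

definition Fn :: "'a topology \<Rightarrow> nat \<Rightarrow> 'a set set" where
  "Fn X n = {A. A \<subseteq> topspace X \<and> A \<noteq> {} \<and> finite A \<and> card A \<le> n}"

definition F1 :: "'a topology \<Rightarrow> 'a set set" where
  "F1 X = {{x} | x. x \<in> topspace X}"

text \<open>Vietoris topology on F_n(X), generated by the subbasic sets
  <U> = {A. A \<subseteq> U} and [U] = {A. A \<inter> U \<noteq> {}} for U open in X (intersected with F_n(X)).\<close>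
definition Fn_top :: "'a topology \<Rightarrow> nat \<Rightarrow> 'a set topology" where
  "Fn_top X n = topology (generate_topology_on
      ({{A \<in> Fn X n. A \<subseteq> U} | U. openin X U} \<union> {{A \<in> Fn X n. A \<inter> U \<noteq> {}} | U. openin X U}))"

definition Fn_map :: "('a \<Rightarrow> 'a) \<Rightarrow> 'a set \<Rightarrow> 'a set" where
  "Fn_map f A = f ` A"

text \<open>Quotient map q : F_n(X) \<rightarrow> SF_n(X) = F_n(X)/F_1(X); a point of SF_n(X) is an
  equivalence class, i.e. a subset of F_n(X): either F_1(X) itself (the point F_X) or a singleton {A}.\<close>
definition qmap :: "'a topology \<Rightarrow> 'a set \<Rightarrow> 'a set set" where
  "qmap X A = (if A \<in> F1 X then F1 X else {A})"

text \<open>Quotient topology on SF_n(X): V is open iff q^{-1}(V) (= \<Union>V) is open in F_n(X).\<close>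
definition SFn_top :: "'a topology \<Rightarrow> nat \<Rightarrow> 'a set set topology" where
  "SFn_top X n = topology (\<lambda>V. V \<subseteq> qmap X ` Fn X n \<and> openin (Fn_top X n) (\<Union>V))"

lemma openin_Fn_top:
  "openin (Fn_top X n) = generate_topology_on
      ({{A \<in> Fn X n. A \<subseteq> U} | U. openin X U} \<union> {{A \<in> Fn X n. A \<inter> U \<noteq> {}} | U. openin X U})"
  unfolding Fn_top_def by (simp add: istopology_generate_topology_on)

lemma istopology_SFn: "istopology (\<lambda>V. V \<subseteq> qmap X ` Fn X n \<and> openin (Fn_top X n) (\<Union>V))"
  unfolding istopology_def
proof (rule conjI; intro allI impI)
  fix S T :: "'a set set set"
  assume "S \<subseteq> qmap X ` Fn X n \<and> openin (Fn_top X n) (\<Union>S)"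
    and "T \<subseteq> qmap X ` Fn X n \<and> openin (Fn_top X n) (\<Union>T)"
  moreover have "\<Union>(S \<inter> T) = \<Union>S \<inter> \<Union>T"
  proof
    show "\<Union>S \<inter> \<Union>T \<subseteq> \<Union>(S \<inter> T)"
    proof
      fix A assume "A \<in> \<Union>S \<inter> \<Union>T"
      then obtain s t where st: "s \<in> S" "t \<in> T" "A \<in> s" "A \<in> t" by blast
      have "s = t" using st calculation unfolding qmap_def by (auto split: if_splits)
      then show "A \<in> \<Union>(S \<inter> T)" using st by blast
    qed
  qed blast
  ultimately show "S \<inter> T \<subseteq> qmap X ` Fn X n \<and> openin (Fn_top X n) (\<Union>(S \<inter> T))"
    by (auto intro!: openin_Int)
next
  fix K :: "'a set set set set"
  assume "\<forall>S\<in>K. S \<subseteq> qmap X ` Fn X n \<and> openin (Fn_top X n) (\<Union>S)"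
  then show "\<Union>K \<subseteq> qmap X ` Fn X n \<and> openin (Fn_top X n) (\<Union>(\<Union>K))"
  proof -
    have "\<Union>(\<Union>K) = \<Union>(Union ` K)" by blast
    moreover have "openin (Fn_top X n) (\<Union>(Union ` K))"
      using \<open>\<forall>S\<in>K. _\<close> by (intro openin_Union) auto
    ultimately show ?thesis using \<open>\<forall>S\<in>K. _\<close> by auto
  qed
qed

lemma openin_SFn_top:
  "openin (SFn_top X n) = (\<lambda>V. V \<subseteq> qmap X ` Fn X n \<and> openin (Fn_top X n) (\<Union>V))"
  unfolding SFn_top_def using istopology_SFn by (rule topology_inverse')

definition SFn_map :: "'a topology \<Rightarrow> ('a \<Rightarrow> 'a) \<Rightarrow> 'a set set \<Rightarrow> 'a set set" where
  "SFn_map X f c = (if c = F1 X then F1 X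
                     else qmap X (Fn_map f (THE A. c = {A})))"

definition quasi_periodic_point :: "'b topology \<Rightarrow> ('b \<Rightarrow> 'b) \<Rightarrow> 'b \<Rightarrow> bool" where
  "quasi_periodic_point Z g x \<longleftrightarrow>
     (\<forall>U. openin Z U \<and> x \<in> U \<longrightarrow> (\<exists>m::nat. m \<ge> 1 \<and> (\<forall>k::nat. (g ^^ (k * m)) x \<in> U)))"

end

(* Periods of two neighbourhoods combine into the common period m1 * m2,
   so the property survives finite intersections and need only be checked on a subbasis. On the
   Vietoris subbasis, A \<in> <U> requires all the finitely many points of A to return to U
   simultaneously (product of their periods), and A \<in> [U] just one of them. For the second
   implication, q is a continuous semiconjugacy from F_n(f) to SF_n(f), and continuous
   semiconjugacies carry quasi-periodic points to quasi-periodic points. *)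

theory Submission
  imports Defs
begin

definition holds_on_multiples :: "(nat \<Rightarrow> bool) \<Rightarrow> bool" where
  "holds_on_multiples P \<longleftrightarrow> (\<exists>m\<ge>1. \<forall>k. P (k * m))"

lemma holds_on_multiples_mono:
  assumes "holds_on_multiples P" and "\<And>j. P j \<Longrightarrow> Q j"
  shows "holds_on_multiples Q"
  using assms unfolding holds_on_multiples_def by blast

lemma holds_on_multiples_conj:
  assumes "holds_on_multiples P" and "holds_on_multiples Q"
  shows "holds_on_multiples (\<lambda>j. P j \<and> Q j)"
proof -
  obtain m1 m2 where m1: "m1 \<ge> 1" "\<forall>k. P (k * m1)" and m2: "m2 \<ge> 1" "\<forall>k. Q (k * m2)"
    using assms unfolding holds_on_multiples_def by blast
  have "P (k * (m1 * m2)) \<and> Q (k * (m1 * m2))" for k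
    using m1(2)[rule_format, of "k * m2"] m2(2)[rule_format, of "k * m1"] by (simp add: ac_simps)
  moreover have "m1 * m2 \<ge> 1" using m1(1) m2(1) by simp
  ultimately show ?thesis unfolding holds_on_multiples_def by blast
qed

lemma holds_on_multiples_Ball:
  assumes "finite I" and "\<forall>i\<in>I. holds_on_multiples (P i)"
  shows "holds_on_multiples (\<lambda>j. \<forall>i\<in>I. P i j)"
  using assms
proof (induction I rule: finite_induct)
  case empty
  then show ?case unfolding holds_on_multiples_def by auto
next
  case (insert i I)
  then have "holds_on_multiples (\<lambda>j. P i j \<and> (\<forall>i\<in>I. P i j))"
    by (intro holds_on_multiples_conj) auto
  then show ?case by simp
qed

lemma quasi_periodic_point_iff:
  "quasi_periodic_point Z g x \<longleftrightarrow>
     (\<forall>U. openin Z U \<and> x \<in> U \<longrightarrow> holds_on_multiples (\<lambda>j. (g ^^ j) x \<in> U))"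
  unfolding quasi_periodic_point_def holds_on_multiples_def by simp

lemma quasi_periodic_point_subbasis:
  assumes "\<And>s. s \<in> S \<Longrightarrow> x \<in> s \<Longrightarrow> holds_on_multiples (\<lambda>j. (g ^^ j) x \<in> s)"
  shows "quasi_periodic_point (topology_generated_by S) g x"
  unfolding quasi_periodic_point_iff openin_topology_generated_by_iff
proof (intro allI impI, elim conjE)
  fix U
  assume "generate_topology_on S U" and "x \<in> U"
  then show "holds_on_multiples (\<lambda>j. (g ^^ j) x \<in> U)"
  proof induction
    case Empty
    then show ?case by simp
  next
    case (Int a b)
    then show ?case using holds_on_multiples_conj[of "\<lambda>j. (g ^^ j) x \<in> a"] by simp
  next
    case (UN K)
    then obtain k where "k \<in> K" "x \<in> k" by blast
    with UN.IH show ?case by (blast intro: holds_on_multiples_mono)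
  next
    case (Basis s)
    then show ?case using assms by blast
  qed
qed

lemma funpow_in_invariant_set:
  assumes "\<forall>z\<in>T. g z \<in> T" and "x \<in> T"
  shows "(g ^^ j) x \<in> T"
  using assms by (induction j) auto

lemma funpow_semiconj:
  assumes "\<forall>z\<in>T. g z \<in> T" and "\<forall>z\<in>T. h (g z) = g' (h z)" and "x \<in> T"
  shows "(g' ^^ j) (h x) = h ((g ^^ j) x)"
  using assms funpow_in_invariant_set[OF assms(1,3)] by (induction j) auto

lemma quasi_periodic_point_semiconj:
  assumes h: "continuous_map Z W h"
    and g: "\<forall>z\<in>topspace Z. g z \<in> topspace Z"
    and conj: "\<forall>z\<in>topspace Z. h (g z) = g' (h z)"
    and x: "x \<in> topspace Z"
    and qp: "quasi_periodic_point Z g x"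
  shows "quasi_periodic_point W g' (h x)"
  unfolding quasi_periodic_point_iff
proof (intro allI impI, elim conjE)
  fix U
  assume "openin W U" and "h x \<in> U"
  then have "openin Z {z \<in> topspace Z. h z \<in> U}" and "x \<in> {z \<in> topspace Z. h z \<in> U}"
    using h x by (auto simp: continuous_map_def)
  then have "holds_on_multiples (\<lambda>j. (g ^^ j) x \<in> {z \<in> topspace Z. h z \<in> U})"
    using qp unfolding quasi_periodic_point_iff by blast
  then show "holds_on_multiples (\<lambda>j. (g' ^^ j) (h x) \<in> U)"
    by (rule holds_on_multiples_mono) (simp add: funpow_semiconj[OF g conj x])
qed

lemma funpow_Fn_map: "(Fn_map f ^^ j) A = (f ^^ j) ` A"
  by (induction j) (auto simp: Fn_map_def image_comp)

lemma image_in_Fn: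
  assumes "\<forall>x\<in>topspace X. g x \<in> topspace X" and "A \<in> Fn X n"
  shows "g ` A \<in> Fn X n"
proof -
  have "card (g ` A) \<le> card A" using assms(2) by (intro card_image_le) (auto simp: Fn_def)
  then show ?thesis using assms by (auto simp: Fn_def)
qed

lemma topspace_Fn_top: "topspace (Fn_top X n) = Fn X n"
  by (auto simp: Fn_top_def Fn_def)

lemma quasi_periodic_point_Fn_map:
  assumes f: "\<forall>x\<in>topspace X. f x \<in> topspace X" and A: "A \<in> Fn X n"
    and qp: "\<forall>x\<in>A. quasi_periodic_point X f x"
  shows "quasi_periodic_point (Fn_top X n) (Fn_map f) A"
  unfolding Fn_top_def
proof (rule quasi_periodic_point_subbasis, unfold funpow_Fn_map)
  have orbit_in_Fn: "(f ^^ j) ` A \<in> Fn X n" for j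
    using funpow_in_invariant_set[OF f] by (intro image_in_Fn[OF _ A]) blast
  fix s
  assume "s \<in> {{B \<in> Fn X n. B \<subseteq> U} | U. openin X U} \<union> {{B \<in> Fn X n. B \<inter> U \<noteq> {}} | U. openin X U}"
    and "A \<in> s"
  then consider U where "openin X U" "s = {B \<in> Fn X n. B \<subseteq> U}" "A \<subseteq> U"
    | U x where "openin X U" "s = {B \<in> Fn X n. B \<inter> U \<noteq> {}}" "x \<in> A" "x \<in> U"
    by blast
  then show "holds_on_multiples (\<lambda>j. (f ^^ j) ` A \<in> s)"
  proof cases
    case 1
    then have "\<forall>x\<in>A. holds_on_multiples (\<lambda>j. (f ^^ j) x \<in> U)"
      using qp unfolding quasi_periodic_point_iff by blast
    then have "holds_on_multiples (\<lambda>j. \<forall>x\<in>A. (f ^^ j) x \<in> U)"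
      using A by (intro holds_on_multiples_Ball) (auto simp: Fn_def)
    then show ?thesis by (rule holds_on_multiples_mono) (use 1 orbit_in_Fn in auto)
  next
    case 2
    then have "holds_on_multiples (\<lambda>j. (f ^^ j) x \<in> U)"
      using qp unfolding quasi_periodic_point_iff by blast
    then show ?thesis by (rule holds_on_multiples_mono) (use 2 orbit_in_Fn in auto)
  qed
qed

lemma qmap_eq_if_mem: "C \<in> qmap X B \<Longrightarrow> qmap X C = qmap X B"
  by (auto simp: qmap_def split: if_splits)

lemma F1_subset_Fn: "n \<ge> 1 \<Longrightarrow> F1 X \<subseteq> Fn X n"
  by (auto simp: F1_def Fn_def)

lemma Union_qmap_Fn: "\<Union>(qmap X ` Fn X n) = Fn X n"
proof
  show "Fn X n \<subseteq> \<Union>(qmap X ` Fn X n)"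
    by (auto simp: qmap_def)
next
  show "\<Union>(qmap X ` Fn X n) \<subseteq> Fn X n"
  proof clarify
    fix B C
    assume B: "B \<in> Fn X n" and C: "C \<in> qmap X B"
    show "C \<in> Fn X n"
    proof (cases "B \<in> F1 X")
      case True
      then have "n \<ge> 1" using B by (auto simp: F1_def Fn_def)
      with True C show ?thesis using F1_subset_Fn by (auto simp: qmap_def)
    next
      case False
      with B C show ?thesis by (simp add: qmap_def)
    qed
  qed
qed

lemma topspace_SFn_top: "topspace (SFn_top X n) = qmap X ` Fn X n"
proof -
  have "openin (SFn_top X n) (qmap X ` Fn X n)"
    using openin_topspace[of "Fn_top X n"] by (simp add: openin_SFn_top Union_qmap_Fn topspace_Fn_top)
  then show ?thesis
    using openin_subset by (auto simp: topspace_def openin_SFn_top)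
qed

lemma continuous_map_qmap: "continuous_map (Fn_top X n) (SFn_top X n) (qmap X)"
  unfolding continuous_map_def topspace_Fn_top topspace_SFn_top
proof (intro conjI allI impI)
  fix V
  assume "openin (SFn_top X n) V"
  then have V: "V \<subseteq> qmap X ` Fn X n" "openin (Fn_top X n) (\<Union>V)"
    by (simp_all add: openin_SFn_top)
  have "{B \<in> Fn X n. qmap X B \<in> V} = \<Union>V"
  proof
    show "{B \<in> Fn X n. qmap X B \<in> V} \<subseteq> \<Union>V"
      by (auto simp: qmap_def split: if_splits)
    show "\<Union>V \<subseteq> {B \<in> Fn X n. qmap X B \<in> V}"
    proof clarify
      fix B v
      assume "B \<in> v" "v \<in> V"
      then obtain C where "C \<in> Fn X n" "B \<in> qmap X C" "v = qmap X C" using V(1) by blast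
      then have "B \<in> \<Union>(qmap X ` Fn X n)" and "qmap X B = v"
        using qmap_eq_if_mem by blast+
      with \<open>v \<in> V\<close> show "B \<in> Fn X n \<and> qmap X B \<in> V"
        by (simp add: Union_qmap_Fn)
    qed
  qed
  with V(2) show "openin (Fn_top X n) {B \<in> Fn X n. qmap X B \<in> V}" by simp
qed blast

lemma SFn_map_qmap:
  assumes "\<forall>x\<in>topspace X. f x \<in> topspace X"
  shows "SFn_map X f (qmap X B) = qmap X (Fn_map f B)"
proof (cases "B \<in> F1 X")
  case True
  then have "Fn_map f B \<in> F1 X" using assms by (auto simp: F1_def Fn_map_def)
  with True show ?thesis by (simp add: qmap_def SFn_map_def)
next
  case False
  then have "{B} \<noteq> F1 X" by auto
  with False show ?thesis by (simp add: qmap_def SFn_map_def)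
qed

theorem theorem6:
  fixes X :: "'a topology" and n :: nat and A :: "'a set" and f :: "'a \<Rightarrow> 'a"
  assumes "compactum X"
    and "n \<ge> 2"
    and "A \<in> Fn X n"
    and "\<forall>x\<in>topspace X. f x \<in> topspace X"
  shows "((\<forall>x\<in>A. quasi_periodic_point X f x)
            \<longrightarrow> quasi_periodic_point (Fn_top X n) (Fn_map f) A)
       \<and> (quasi_periodic_point (Fn_top X n) (Fn_map f) A
            \<longrightarrow> quasi_periodic_point (SFn_top X n) (SFn_map X f) (qmap X A))"
proof (intro conjI impI)
  show "quasi_periodic_point (Fn_top X n) (Fn_map f) A"
    if "\<forall>x\<in>A. quasi_periodic_point X f x"
    using quasi_periodic_point_Fn_map[OF assms(4,3) that] .
next
  have Fn_map_into_Fn: "\<forall>B\<in>topspace (Fn_top X n). Fn_map f B \<in> topspace (Fn_top X n)"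
    using image_in_Fn[OF assms(4)] by (simp add: topspace_Fn_top Fn_map_def)
  have semiconj: "\<forall>B\<in>topspace (Fn_top X n). qmap X (Fn_map f B) = SFn_map X f (qmap X B)"
    using SFn_map_qmap[OF assms(4)] by simp
  have A_in: "A \<in> topspace (Fn_top X n)"
    using assms(3) by (simp add: topspace_Fn_top)
  show "quasi_periodic_point (SFn_top X n) (SFn_map X f) (qmap X A)"
    if "quasi_periodic_point (Fn_top X n) (Fn_map f) A"
    using quasi_periodic_point_semiconj[OF continuous_map_qmap Fn_map_into_Fn semiconj A_in that] .
qed

end
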